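(* Let $\mathcal{X}\subseteq\mathbb{L}^0_+$, and for $n\in\mathbb{N}$ let $\mathcal{O}_n:=\{Y\in\mathbb{L}^0_+ : Y\le Z\text{ for some }Z\in\mathrm{conv}\{(X-n)_+ : X\in\mathcal{X}\}\}$ and $u_n(\mu):=\sup_{X\in\mathcal{O}_n}\int X\,\mathrm{d}\mu$ for $\mu\in\mathcal{M}^0_+$. If $\bigcap_{n\in\mathbb{N}}\mathcal{O}_n=\{0\}$, then there exists $\mu_0\in\mathcal{M}^0_+$ equivalent to $\mathbb{P}$ such that $u_n(\mu_0)\le 1$ for all $n\in\mathbb{N}$.
   Context: $(\Omega,\mathcal{F},\mathbb{P})$ is a probability space; $\mathbb{L}^0_+$ is the set of (equivalence classes modulo null sets of) nonnegative real-valued random variables; $\mathrm{conv}$ is the convex hull; $x_+=\max\{x,0\}$. $\mathcal{M}^0_+$ is the set of all $\sigma$-finite nonnegative measures on $(\Omega,\mathcal{F})$ absolutely continuous with respect to $\mathbb{P}$. *)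

theory Defs
  imports "HOL-Probability.Probability"
begin

text \<open>Nonnegative real-valued random variables (representatives of classes in L^0_+).\<close>
definition L0plus :: "'a measure \<Rightarrow> ('a \<Rightarrow> real) set" where
  "L0plus M = {f \<in> borel_measurable M. \<forall>x\<in>space M. 0 \<le> f x}"

definition conv_shift :: "('a \<Rightarrow> real) set \<Rightarrow> nat \<Rightarrow> ('a \<Rightarrow> real) set" where
  "conv_shift XX n = {Z. \<exists>(k::nat) (c::nat \<Rightarrow> real) (X::nat \<Rightarrow> 'a \<Rightarrow> real).
      0 < k \<and> (\<forall>i<k. 0 \<le> c i \<and> X i \<in> XX) \<and> (\<Sum>i<k. c i) = 1 \<and>
      Z = (\<lambda>\<omega>. \<Sum>i<k. c i * max (X i \<omega> - real n) 0)}"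

definition O_set :: "'a measure \<Rightarrow> ('a \<Rightarrow> real) set \<Rightarrow> nat \<Rightarrow> ('a \<Rightarrow> real) set" where
  "O_set M XX n = {Y \<in> L0plus M. \<exists>Z\<in>conv_shift XX n. AE \<omega> in M. Y \<omega> \<le> Z \<omega>}"

definition u_fun :: "'a measure \<Rightarrow> ('a \<Rightarrow> real) set \<Rightarrow> nat \<Rightarrow> 'a measure \<Rightarrow> ennreal" where
  "u_fun M XX n \<mu> = (SUP Y\<in>O_set M XX n. \<integral>\<^sup>+ \<omega>. ennreal (Y \<omega>) \<partial>\<mu>)"

definition M0plus :: "'a measure \<Rightarrow> 'a measure set" where
  "M0plus M = {\<mu>. sets \<mu> = sets M \<and> sigma_finite_measure \<mu> \<and> absolutely_continuous M \<mu>}"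

end

theory Submission
  imports Defs
begin

text \<open>
  The measure is assembled by exhaustion from events \<open>B\<close> on which \<open>E[X 1\<^sub>B]\<close> is bounded uniformly in
  \<open>X \<in> \<X>\<close>; the local step producing such a \<open>B\<close> inside a given non-null event \<open>A\<close> is a Hilbert-space
  projection argument.  Since \<open>\<Inter>\<^sub>n \<O>\<^sub>n = {0}\<close>, the indicator \<open>1\<^sub>A\<close> keeps a positive \<open>L\<^sup>2\<close>-distance \<open>\<delta>\<close> from the
  members of some \<open>\<O>\<^sub>N\<close> bounded by 1: otherwise \<open>1\<^sub>A\<^sub>'/2\<close> would lie in every \<open>\<O>\<^sub>N\<close> for a non-null \<open>A' \<subseteq> A\<close>.
  Let \<open>Vs\<close> be the projection of \<open>1\<^sub>A\<close> onto these members and \<open>h = 1\<^sub>A - Vs\<close>.  As \<open>\<O>\<^sub>N\<close> is convex and solid,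
  the variational inequality gives \<open>E[h\<^sup>+ V] \<le> E[h Vs]\<close> for all bounded \<open>V \<in> \<O>\<^sub>N\<close>, whereas
  \<open>E[h 1\<^sub>A] \<ge> \<delta> + E[h Vs]\<close>.  Hence \<open>h \<ge> \<epsilon>\<close> on a non-null \<open>B \<subseteq> A\<close>, and \<open>E[X 1\<^sub>B] \<le> N + E[h Vs]/\<epsilon>\<close> because
  \<open>(X - N)\<^sup>+ \<in> \<O>\<^sub>N\<close>.  Covering \<open>\<Omega>\<close> a.s. by countably many such \<open>B\<^sub>j\<close> with bounds \<open>K\<^sub>j\<close>, the density
  \<open>\<Sum>\<^sub>j 2\<^sup>-\<^sup>j\<^sup>-\<^sup>1 1\<^bsub>B\<^sub>j\<^esub> / (1 + K\<^sub>j)\<close> defines \<open>\<mu>\<^sub>0 \<sim> P\<close> with \<open>\<integral>X d\<mu>\<^sub>0 \<le> 1\<close> for \<open>X \<in> \<X>\<close>, hence \<open>u\<^sub>n(\<mu>\<^sub>0) \<le> 1\<close>.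
\<close>

definition solid :: "'a measure \<Rightarrow> ('a \<Rightarrow> real) set \<Rightarrow> bool" where
  "solid M S \<longleftrightarrow> (\<forall>Y\<in>S. \<forall>W\<in>borel_measurable M. (\<forall>w\<in>space M. 0 \<le> W w \<and> W w \<le> Y w) \<longrightarrow> W \<in> S)"

definition pointwise_convex :: "('a \<Rightarrow> real) set \<Rightarrow> bool" where
  "pointwise_convex S \<longleftrightarrow>
    (\<forall>Y1\<in>S. \<forall>Y2\<in>S. \<forall>t::real. 0 \<le> t \<and> t \<le> 1 \<longrightarrow> (\<lambda>w. t * Y1 w + (1 - t) * Y2 w) \<in> S)"

lemma solidD:
  "solid M S \<Longrightarrow> Y \<in> S \<Longrightarrow> W \<in> borel_measurable M \<Longrightarrow> (\<And>w. w \<in> space M \<Longrightarrow> 0 \<le> W w \<and> W w \<le> Y w)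
    \<Longrightarrow> W \<in> S"
  unfolding solid_def by blast

lemma pointwise_convexD:
  "pointwise_convex S \<Longrightarrow> Y1 \<in> S \<Longrightarrow> Y2 \<in> S \<Longrightarrow> 0 \<le> t \<Longrightarrow> t \<le> 1
    \<Longrightarrow> (\<lambda>w. t * Y1 w + (1 - t) * Y2 w) \<in> S"
  unfolding pointwise_convex_def by blast

lemma L0plusD:
  "Y \<in> L0plus M \<Longrightarrow> Y \<in> borel_measurable M"
  "Y \<in> L0plus M \<Longrightarrow> w \<in> space M \<Longrightarrow> 0 \<le> Y w"
  unfolding L0plus_def by auto

lemma conv_shiftE:
  assumes "Z \<in> conv_shift XX n"
  obtains k :: nat and c :: "nat \<Rightarrow> real" and X :: "nat \<Rightarrow> 'a \<Rightarrow> real"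
  where "0 < k" "\<And>i. i < k \<Longrightarrow> 0 \<le> c i \<and> X i \<in> XX" "(\<Sum>i<k. c i) = 1"
    "Z = (\<lambda>w. \<Sum>i<k. c i * max (X i w - real n) 0)"
  using assms that unfolding conv_shift_def by auto

lemma conv_shift_singleton:
  assumes "X \<in> XX"
  shows "(\<lambda>w. max (X w - real n) 0) \<in> conv_shift XX n"
  unfolding conv_shift_def using assms
  by (intro CollectI exI[of _ 1] exI[of _ "\<lambda>_. 1"] exI[of _ "\<lambda>_. X"]) auto

lemma sum_lessThan_add_split:
  fixes g :: "nat \<Rightarrow> 'b::comm_monoid_add"
  shows "(\<Sum>i<k + l. g i) = (\<Sum>i<k. g i) + (\<Sum>i<l. g (i + k))"
  by (induction l) (simp_all add: add_ac)

lemma conv_shift_convex: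
  assumes "Z1 \<in> conv_shift XX n" "Z2 \<in> conv_shift XX n" "0 \<le> t" "t \<le> 1"
  shows "(\<lambda>w. t * Z1 w + (1 - t) * Z2 w) \<in> conv_shift XX n"
proof -
  obtain k1 :: nat and c1 X1 where 1: "0 < k1" "\<And>i. i < k1 \<Longrightarrow> 0 \<le> c1 i \<and> X1 i \<in> XX" "(\<Sum>i<k1. c1 i) = 1"
    "Z1 = (\<lambda>w. \<Sum>i<k1. c1 i * max (X1 i w - real n) 0)"
    using assms(1) by (elim conv_shiftE) blast
  obtain k2 :: nat and c2 X2 where 2: "0 < k2" "\<And>i. i < k2 \<Longrightarrow> 0 \<le> c2 i \<and> X2 i \<in> XX" "(\<Sum>i<k2. c2 i) = 1"
    "Z2 = (\<lambda>w. \<Sum>i<k2. c2 i * max (X2 i w - real n) 0)"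
    using assms(2) by (elim conv_shiftE) blast
  define c where "c i = (if i < k1 then t * c1 i else (1 - t) * c2 (i - k1))" for i
  define X where "X i = (if i < k1 then X1 i else X2 (i - k1))" for i
  have "(\<Sum>i<k1 + k2. c i) = 1"
    using 1(3) 2(3) by (simp add: sum_lessThan_add_split c_def sum_distrib_left[symmetric])
  moreover have "(\<lambda>w. t * Z1 w + (1 - t) * Z2 w) = (\<lambda>w. \<Sum>i<k1 + k2. c i * max (X i w - real n) 0)"
    by (simp add: 1(4) 2(4) sum_lessThan_add_split c_def X_def sum_distrib_left mult.assoc)
  moreover have "\<forall>i<k1 + k2. 0 \<le> c i \<and> X i \<in> XX"
    using 1(2) 2(2) assms(3,4) by (auto simp: c_def X_def)
  ultimately show ?thesis
    unfolding conv_shift_def using 1(1) by blast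
qed

lemma conv_shift_le_convex_combination:
  assumes "XX \<subseteq> L0plus M" "Z \<in> conv_shift XX n"
  obtains k :: nat and c :: "nat \<Rightarrow> real" and X :: "nat \<Rightarrow> 'a \<Rightarrow> real"
  where "\<And>i. i < k \<Longrightarrow> 0 \<le> c i \<and> X i \<in> XX" "(\<Sum>i<k. c i) = 1"
    "\<And>w. w \<in> space M \<Longrightarrow> Z w \<le> (\<Sum>i<k. c i * X i w)"
proof -
  obtain k :: nat and c X where kcX: "0 < k" "\<And>i. i < k \<Longrightarrow> 0 \<le> c i \<and> X i \<in> XX" "(\<Sum>i<k. c i) = 1"
    "Z = (\<lambda>w. \<Sum>i<k. c i * max (X i w - real n) 0)"
    using assms(2) by (elim conv_shiftE) blast
  have "Z w \<le> (\<Sum>i<k. c i * X i w)" if "w \<in> space M" for w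
    unfolding kcX(4) using kcX(2) assms(1) that
    by (intro sum_mono mult_left_mono) (auto dest!: L0plusD(2))
  with kcX(2,3) show thesis by (rule that)
qed

lemma O_setI:
  "Y \<in> L0plus M \<Longrightarrow> Z \<in> conv_shift XX n \<Longrightarrow> AE w in M. Y w \<le> Z w \<Longrightarrow> Y \<in> O_set M XX n"
  unfolding O_set_def by blast

lemma O_set_subset_L0plus: "O_set M XX n \<subseteq> L0plus M"
  unfolding O_set_def by auto

lemma solid_O_set: "solid M (O_set M XX n)"
  unfolding solid_def
proof (intro ballI impI)
  fix Y W assume Y: "Y \<in> O_set M XX n" and W: "W \<in> borel_measurable M"
    and le: "\<forall>w\<in>space M. 0 \<le> W w \<and> W w \<le> Y w"
  obtain Z where Z: "Z \<in> conv_shift XX n" "AE w in M. Y w \<le> Z w"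
    using Y unfolding O_set_def by blast
  have "AE w in M. W w \<le> Z w"
    using Z(2) AE_space by eventually_elim (use le in force)
  with W le Z(1) show "W \<in> O_set M XX n"
    unfolding O_set_def L0plus_def by blast
qed

lemma pointwise_convex_O_set: "pointwise_convex (O_set M XX n)"
  unfolding pointwise_convex_def
proof (intro ballI allI impI)
  fix Y1 Y2 and t :: real
  assume Y: "Y1 \<in> O_set M XX n" "Y2 \<in> O_set M XX n" and t: "0 \<le> t \<and> t \<le> 1"
  obtain Z1 Z2 where Z: "Z1 \<in> conv_shift XX n" "AE w in M. Y1 w \<le> Z1 w"
    "Z2 \<in> conv_shift XX n" "AE w in M. Y2 w \<le> Z2 w"
    using Y unfolding O_set_def by blast
  have "AE w in M. t * Y1 w + (1 - t) * Y2 w \<le> t * Z1 w + (1 - t) * Z2 w"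
    using Z(2,4) by eventually_elim (use t in \<open>simp add: add_mono mult_left_mono\<close>)
  moreover have "(\<lambda>w. t * Y1 w + (1 - t) * Y2 w) \<in> L0plus M"
  proof -
    have Y1: "Y1 \<in> L0plus M" and Y2: "Y2 \<in> L0plus M"
      using Y O_set_subset_L0plus by blast+
    note [measurable] = L0plusD(1)[OF Y1] L0plusD(1)[OF Y2]
    have "(\<lambda>w. t * Y1 w + (1 - t) * Y2 w) \<in> borel_measurable M"
      by measurable
    then show ?thesis
      unfolding L0plus_def using t L0plusD(2)[OF Y1] L0plusD(2)[OF Y2] by simp
  qed
  ultimately show "(\<lambda>w. t * Y1 w + (1 - t) * Y2 w) \<in> O_set M XX n"
    using conv_shift_convex[OF Z(1,3)] t by (intro O_setI) auto
qed

lemma shift_in_O_set: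
  assumes "X \<in> XX" "X \<in> borel_measurable M"
  shows "(\<lambda>w. max (X w - real n) 0) \<in> O_set M XX n"
  unfolding O_set_def L0plus_def using assms conv_shift_singleton[OF assms(1), of n]
  by (auto intro!: bexI[of _ "\<lambda>w. max (X w - real n) 0"])

lemma abs_le_amgm:
  fixes a x :: real
  assumes "0 < a"
  shows "\<bar>x\<bar> \<le> (a * x\<^sup>2 + 1 / a) / 2"
proof -
  have "0 \<le> (a * \<bar>x\<bar> - 1)\<^sup>2" by simp
  then have "2 * a * \<bar>x\<bar> \<le> a\<^sup>2 * x\<^sup>2 + 1"
    by (simp add: power2_eq_square algebra_simps)
  then show ?thesis
    using assms by (simp add: field_simps power2_eq_square)
qed

lemma nonpos_of_quadratic_bound:
  fixes p q :: real
  assumes "\<And>t. 0 < t \<Longrightarrow> t \<le> 1 \<Longrightarrow> 2 * t * p \<le> t\<^sup>2 * q"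
  shows "p \<le> 0"
proof (rule ccontr)
  assume "\<not> p \<le> 0"
  then have p: "0 < p" by simp
  define t where "t = min 1 (p / (\<bar>q\<bar> + 1))"
  have t: "0 < t" "t \<le> 1"
    unfolding t_def using p by auto
  have "t * q \<le> t * \<bar>q\<bar>"
    using t by (simp add: mult_left_mono)
  also have "\<dots> \<le> p / (\<bar>q\<bar> + 1) * \<bar>q\<bar>"
    unfolding t_def by (intro mult_right_mono) auto
  also have "\<dots> < p"
    using p by (simp add: field_simps)
  finally have "t * q < p" .
  moreover have "t * (2 * p) \<le> t * (t * q)"
    using assms[OF t] by (simp add: power2_eq_square algebra_simps)
  ultimately show False
    using t p by (simp add: mult_le_cancel_left)
qed

context finite_measure
begin

lemma integrable_bounded:
  fixes f :: "'a \<Rightarrow> real"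
  assumes "f \<in> borel_measurable M" "\<And>w. w \<in> space M \<Longrightarrow> \<bar>f w\<bar> \<le> B"
  shows "integrable M f"
  using assms by (intro integrable_const_bound[where B=B] AE_I2) auto

lemma integrable_mult_bounded:
  fixes f g :: "'a \<Rightarrow> real"
  assumes "f \<in> borel_measurable M" "g \<in> borel_measurable M"
    and "\<And>w. w \<in> space M \<Longrightarrow> \<bar>f w\<bar> \<le> A" "\<And>w. w \<in> space M \<Longrightarrow> \<bar>g w\<bar> \<le> B"
  shows "integrable M (\<lambda>w. f w * g w)"
proof (rule integrable_bounded)
  show "\<bar>f w * g w\<bar> \<le> A * B" if "w \<in> space M" for w
    unfolding abs_mult using assms(3,4)[OF that] by (intro mult_mono) auto
qed (use assms(1,2) in measurable)

lemma integral_bounded_convergence: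
  fixes s :: "nat \<Rightarrow> 'a \<Rightarrow> real"
  assumes "\<And>i. s i \<in> borel_measurable M" "f \<in> borel_measurable M"
    and "AE w in M. (\<lambda>i. s i w) \<longlonglongrightarrow> f w" "\<And>i w. w \<in> space M \<Longrightarrow> \<bar>s i w\<bar> \<le> B"
  shows "(\<lambda>i. integral\<^sup>L M (s i)) \<longlonglongrightarrow> integral\<^sup>L M f"
  by (rule integral_dominated_convergence[where w="\<lambda>_. B"]) (use assms in auto)

end

lemma AE_convergent_of_summable_L1_increments:
  fixes s :: "nat \<Rightarrow> 'a \<Rightarrow> real"
  assumes [measurable]: "\<And>j. s j \<in> borel_measurable M"
    and integrable: "\<And>j. integrable M (\<lambda>w. s (Suc j) w - s j w)"
    and summable: "summable (\<lambda>j. \<integral>w. \<bar>s (Suc j) w - s j w\<bar> \<partial>M)"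
  shows "AE w in M. convergent (\<lambda>j. s j w)"
proof -
  define T where "T w = (\<Sum>j. ennreal \<bar>s (Suc j) w - s j w\<bar>)" for w
  have "(\<integral>\<^sup>+w. T w \<partial>M) = (\<Sum>j. \<integral>\<^sup>+w. ennreal \<bar>s (Suc j) w - s j w\<bar> \<partial>M)"
    unfolding T_def by (rule nn_integral_suminf) measurable
  also have "\<dots> = (\<Sum>j. ennreal (\<integral>w. \<bar>s (Suc j) w - s j w\<bar> \<partial>M))"
    using integrable by (intro suminf_cong nn_integral_eq_integral) auto
  also have "\<dots> = ennreal (\<Sum>j. \<integral>w. \<bar>s (Suc j) w - s j w\<bar> \<partial>M)"
    using summable by (intro suminf_ennreal2) auto
  finally have "AE w in M. T w \<noteq> \<infinity>"
    by (intro nn_integral_PInf_AE) (auto simp: T_def)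
  then show ?thesis
  proof eventually_elim
    case (elim w)
    then have "summable (\<lambda>j. \<bar>s (Suc j) w - s j w\<bar>)"
      unfolding T_def by (intro summable_suminf_not_top) auto
    then have "convergent (\<lambda>n. \<Sum>j<n. s (Suc j) w - s j w)"
      using summable_rabs_cancel summable_iff_convergent by blast
    then have "convergent (\<lambda>n. s n w - s 0 w)"
      using sum_lessThan_telescope[of "\<lambda>j. s j w"] by simp
    then show ?case
      by (simp add: convergent_diff_const_right_iff)
  qed
qed

lemma (in prob_space) AE_convergent_of_square_increments:
  fixes s :: "nat \<Rightarrow> 'a \<Rightarrow> real"
  assumes [measurable]: "\<And>j. s j \<in> borel_measurable M"
    and bounded: "\<And>j w. w \<in> space M \<Longrightarrow> \<bar>s j w\<bar> \<le> B"
    and increments: "\<And>j. expectation (\<lambda>w. (s (Suc j) w - s j w)\<^sup>2) \<le> K * (1/4)^j"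
  shows "AE w in M. convergent (\<lambda>j. s j w)"
proof (rule AE_convergent_of_summable_L1_increments)
  have diff_bounded: "\<bar>s (Suc j) w - s j w\<bar> \<le> 2 * B" if "w \<in> space M" for j w
    using bounded[OF that, of j] bounded[OF that, of "Suc j"] by linarith
  then show integrable: "integrable M (\<lambda>w. s (Suc j) w - s j w)" for j
    by (intro integrable_bounded) auto
  have sq_integrable: "integrable M (\<lambda>w. (s (Suc j) w - s j w)\<^sup>2)" for j
    using power_mono[OF diff_bounded abs_ge_zero, of _ j 2]
    by (intro integrable_bounded[where B="(2 * B)\<^sup>2"]) auto
  \<comment> \<open>AM-GM with weight \<open>2\<^sup>j\<close> turns the \<open>L\<^sup>2\<close> rate \<open>(1/4)\<^sup>j\<close> into the \<open>L\<^sup>1\<close> rate \<open>(1/2)\<^sup>j\<close>.\<close>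
  have L1: "expectation (\<lambda>w. \<bar>s (Suc j) w - s j w\<bar>) \<le> (K + 1) / 2 * (1/2)^j" for j
  proof -
    have "expectation (\<lambda>w. \<bar>s (Suc j) w - s j w\<bar>)
        \<le> expectation (\<lambda>w. (2^j * (s (Suc j) w - s j w)\<^sup>2 + 1 / 2^j) / 2)"
      using integrable sq_integrable abs_le_amgm[of "2^j"] by (intro integral_mono) auto
    also have "\<dots> = (2^j * expectation (\<lambda>w. (s (Suc j) w - s j w)\<^sup>2) + 1 / 2^j) / 2"
      using sq_integrable by (simp add: prob_space)
    also have "\<dots> \<le> (2^j * (K * (1/4)^j) + 1 / 2^j) / 2"
      using increments[of j] by (simp add: divide_right_mono)
    also have "\<dots> = (K + 1) / 2 * (1/2)^j"
      by (simp add: field_simps power_mult_distrib[symmetric])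
    finally show ?thesis .
  qed
  show "summable (\<lambda>j. expectation (\<lambda>w. \<bar>s (Suc j) w - s j w\<bar>))"
  proof (rule summable_comparison_test')
    show "summable (\<lambda>j. (K + 1) / 2 * (1/2::real)^j)"
      by (intro summable_mult summable_geometric) auto
    show "norm (expectation (\<lambda>w. \<bar>s (Suc j) w - s j w\<bar>)) \<le> (K + 1) / 2 * (1/2)^j" for j
      using L1[of j] by simp
  qed
qed fact

lemma sq_diff_min_one_le:
  fixes a z :: real
  assumes "0 \<le> a" "a \<le> 1" "0 \<le> z"
  shows "(a - min 1 z)\<^sup>2 \<le> (a - z)\<^sup>2"
  using assms by (auto simp: min_def abs_le_square_iff[symmetric])

text \<open>Projection in \<open>L\<^sup>2\<close> of \<open>g\<close> onto the members of \<open>S\<close> bounded by 1; this set is convex but need not be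
  closed, so the projection is built as an a.s. limit and need not belong to it.\<close>
locale projection_problem = prob_space +
  fixes S :: "('a \<Rightarrow> real) set" and g :: "'a \<Rightarrow> real"
  assumes S_L0plus: "S \<subseteq> L0plus M"
    and solid_S: "solid M S"
    and convex_S: "pointwise_convex S"
    and S_nonempty: "S \<noteq> {}"
    and g_measurable: "g \<in> borel_measurable M"
    and g_unit: "\<And>w. 0 \<le> g w \<and> g w \<le> 1"
begin

declare g_measurable[measurable]

definition unit_part :: "('a \<Rightarrow> real) set" where
  "unit_part = {V \<in> S. \<forall>w\<in>space M. V w \<le> 1}"

definition sq_dist :: "('a \<Rightarrow> real) \<Rightarrow> real" where
  "sq_dist V = expectation (\<lambda>w. (g w - V w)\<^sup>2)"

definition min_sq_dist :: real where
  "min_sq_dist = (INF V\<in>unit_part. sq_dist V)"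

lemma S_measurable: "V \<in> S \<Longrightarrow> V \<in> borel_measurable M"
  and S_nonneg: "V \<in> S \<Longrightarrow> w \<in> space M \<Longrightarrow> 0 \<le> V w"
  using L0plusD subsetD[OF S_L0plus] by metis+

lemma unit_partD:
  assumes "V \<in> unit_part"
  shows "V \<in> S" "V \<in> borel_measurable M" "w \<in> space M \<Longrightarrow> 0 \<le> V w \<and> V w \<le> 1"
  using assms S_measurable S_nonneg unfolding unit_part_def by auto

lemma zero_in_unit_part: "(\<lambda>_. 0) \<in> unit_part"
proof -
  obtain Y where "Y \<in> S"
    using S_nonempty by blast
  then have "(\<lambda>_. 0) \<in> S"
    by (rule solidD[OF solid_S]) (use \<open>Y \<in> S\<close> S_nonneg in auto)
  then show ?thesis
    unfolding unit_part_def by simp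
qed

lemma integrable_sq_dist:
  assumes "V \<in> borel_measurable M" "\<And>w. w \<in> space M \<Longrightarrow> \<bar>V w\<bar> \<le> m"
  shows "integrable M (\<lambda>w. (g w - V w)\<^sup>2)"
proof (rule integrable_bounded)
  show "\<bar>(g w - V w)\<^sup>2\<bar> \<le> (1 + m)\<^sup>2" if "w \<in> space M" for w
  proof -
    have "\<bar>g w - V w\<bar> \<le> 1 + m"
      using g_unit[of w] assms(2)[OF that] by linarith
    from power_mono[OF this abs_ge_zero, of 2] show ?thesis by simp
  qed
qed (use assms(1) in measurable)

lemma sq_dist_nonneg: "0 \<le> sq_dist V"
  unfolding sq_dist_def by simp

lemma bdd_below_sq_dist: "bdd_below (sq_dist ` unit_part)"
  by (intro bdd_belowI2[of _ 0]) (rule sq_dist_nonneg)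

lemma min_sq_dist_le_unit_part: "V \<in> unit_part \<Longrightarrow> min_sq_dist \<le> sq_dist V"
  unfolding min_sq_dist_def using bdd_below_sq_dist by (intro cInf_lower) auto

text \<open>Truncating at level 1 brings a bounded member of \<open>S\<close> closer to \<open>g\<close>, since \<open>g \<le> 1\<close>.\<close>
lemma min_sq_dist_le:
  assumes V: "V \<in> S" "\<And>w. w \<in> space M \<Longrightarrow> V w \<le> m"
  shows "min_sq_dist \<le> sq_dist V"
proof -
  note [measurable] = S_measurable[OF V(1)]
  define U where "U w = min 1 (V w)" for w
  have [measurable]: "U \<in> borel_measurable M"
    unfolding U_def by measurable
  have "U \<in> S"
    by (rule solidD[OF solid_S V(1)]) (auto simp: U_def S_nonneg[OF V(1)])
  then have U: "U \<in> unit_part"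
    unfolding unit_part_def U_def by simp
  have "sq_dist U \<le> sq_dist V"
    unfolding sq_dist_def
  proof (rule integral_mono)
    show "integrable M (\<lambda>w. (g w - U w)\<^sup>2)"
      using unit_partD[OF U] by (intro integrable_sq_dist[where m=1]) auto
    show "integrable M (\<lambda>w. (g w - V w)\<^sup>2)"
      using V S_nonneg[OF V(1)] by (intro integrable_sq_dist[where m=m]) auto
    show "(g w - U w)\<^sup>2 \<le> (g w - V w)\<^sup>2" if "w \<in> space M" for w
      unfolding U_def using g_unit[of w] S_nonneg[OF V(1) that] by (intro sq_diff_min_one_le) auto
  qed
  with min_sq_dist_le_unit_part[OF U] show ?thesis by simp
qed

text \<open>The parallelogram law at the midpoint, which lies in \<open>unit_part\<close> by convexity.\<close>
lemma sq_diff_le_parallelogram: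
  assumes V: "V1 \<in> unit_part" "V2 \<in> unit_part"
  shows "expectation (\<lambda>w. (V1 w - V2 w)\<^sup>2) \<le> 2 * (sq_dist V1 + sq_dist V2) - 4 * min_sq_dist"
proof -
  note [measurable] = unit_partD(2)[OF V(1)] unit_partD(2)[OF V(2)]
  define mid where "mid w = 1/2 * V1 w + (1 - 1/2) * V2 w" for w
  have "mid \<in> S"
    unfolding mid_def by (rule pointwise_convexD[OF convex_S unit_partD(1)[OF V(1)] unit_partD(1)[OF V(2)]]) auto
  moreover have "mid w \<le> 1" if "w \<in> space M" for w
    using unit_partD(3)[OF V(1) that] unit_partD(3)[OF V(2) that] by (simp add: mid_def)
  ultimately have mid: "mid \<in> unit_part"
    unfolding unit_part_def by blast
  have int: "integrable M (\<lambda>w. (g w - V w)\<^sup>2)" if "V \<in> unit_part" for V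
    using unit_partD[OF that] by (intro integrable_sq_dist[where m=1]) auto
  have int_diff: "integrable M (\<lambda>w. (V1 w - V2 w)\<^sup>2)"
  proof (rule integrable_bounded)
    show "\<bar>(V1 w - V2 w)\<^sup>2\<bar> \<le> 1" if "w \<in> space M" for w
      using unit_partD(3)[OF V(1) that] unit_partD(3)[OF V(2) that]
      by (simp add: abs_square_le_1 abs_le_iff)
  qed measurable
  have "sq_dist V1 + sq_dist V2 = expectation (\<lambda>w. (g w - V1 w)\<^sup>2 + (g w - V2 w)\<^sup>2)"
    unfolding sq_dist_def using int[OF V(1)] int[OF V(2)] by simp
  also have "\<dots> = expectation (\<lambda>w. 2 * (g w - mid w)\<^sup>2 + 1/2 * (V1 w - V2 w)\<^sup>2)"
    by (rule Bochner_Integration.integral_cong) (auto simp: mid_def power2_eq_square algebra_simps)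
  also have "\<dots> = 2 * sq_dist mid + 1/2 * expectation (\<lambda>w. (V1 w - V2 w)\<^sup>2)"
    unfolding sq_dist_def using int[OF mid] int_diff by simp
  finally show ?thesis
    using min_sq_dist_le_unit_part[OF mid] by simp
qed

lemma exists_minimizing_sequence:
  obtains W where "\<And>j. W j \<in> unit_part" "\<And>j. sq_dist (W j) < min_sq_dist + (1/4)^j"
proof -
  have "\<exists>V. V \<in> unit_part \<and> sq_dist V < min_sq_dist + (1/4)^j" for j :: nat
  proof -
    have "Inf (sq_dist ` unit_part) < min_sq_dist + (1/4)^j"
      unfolding min_sq_dist_def by simp
    then show ?thesis
      using zero_in_unit_part bdd_below_sq_dist by (subst (asm) cInf_less_iff) auto
  qed
  then obtain W where "\<And>j. W j \<in> unit_part \<and> sq_dist (W j) < min_sq_dist + (1/4)^j"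
    by metis
  with that show thesis by blast
qed

text \<open>By the parallelogram law a minimizing sequence is Cauchy in \<open>L\<^sup>2\<close> at a geometric rate.\<close>
lemma minimizing_sequence_AE_convergent:
  assumes W: "\<And>j. W j \<in> unit_part" "\<And>j. sq_dist (W j) < min_sq_dist + (1/4)^j"
  shows "AE w in M. convergent (\<lambda>j. W j w)"
proof (rule AE_convergent_of_square_increments[where B=1 and K=4])
  show "W j \<in> borel_measurable M" for j
    using unit_partD(2)[OF W(1)] .
  show "\<bar>W j w\<bar> \<le> 1" if "w \<in> space M" for j w
    using unit_partD(3)[OF W(1) that] by simp
  show "expectation (\<lambda>w. (W (Suc j) w - W j w)\<^sup>2) \<le> 4 * (1/4)^j" for j
  proof -
    have "expectation (\<lambda>w. (W (Suc j) w - W j w)\<^sup>2)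
        \<le> 2 * (sq_dist (W (Suc j)) + sq_dist (W j)) - 4 * min_sq_dist"
      by (rule sq_diff_le_parallelogram[OF W(1) W(1)])
    also have "\<dots> \<le> 2 * ((1/4)^Suc j + (1/4)^j)"
      using W(2)[of j] W(2)[of "Suc j"] by simp
    also have "\<dots> = 5/2 * (1/4)^j"
      by simp
    also have "\<dots> \<le> 4 * (1/4)^j"
      by (intro mult_right_mono) auto
    finally show ?thesis .
  qed
qed

lemma exists_minimizer:
  obtains Vs W where "Vs \<in> borel_measurable M" "\<And>w. 0 \<le> Vs w \<and> Vs w \<le> 1"
    "\<And>j. W j \<in> unit_part" "AE w in M. (\<lambda>j. W j w) \<longlonglongrightarrow> Vs w" "sq_dist Vs = min_sq_dist"
proof -
  obtain W where W: "\<And>j. W j \<in> unit_part" "\<And>j. sq_dist (W j) < min_sq_dist + (1/4)^j"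
    by (rule exists_minimizing_sequence) blast
  note [measurable] = unit_partD(2)[OF W(1)]
  have W_unit: "0 \<le> W j w \<and> W j w \<le> 1" if "w \<in> space M" for j w
    using unit_partD(3)[OF W(1) that] .
  define Vs where "Vs w = max 0 (min 1 (lim (\<lambda>j. W j w)))" for w
  have Vs_unit: "0 \<le> Vs w \<and> Vs w \<le> 1" for w
    unfolding Vs_def by auto
  have Vs_measurable[measurable]: "Vs \<in> borel_measurable M"
    unfolding Vs_def by measurable
  have lim: "AE w in M. (\<lambda>j. W j w) \<longlonglongrightarrow> Vs w"
    using minimizing_sequence_AE_convergent[OF W] AE_space
  proof eventually_elim
    case (elim w)
    then have "(\<lambda>j. W j w) \<longlonglongrightarrow> lim (\<lambda>j. W j w)"
      by (simp add: convergent_LIMSEQ_iff)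
    moreover from this have "0 \<le> lim (\<lambda>j. W j w)" "lim (\<lambda>j. W j w) \<le> 1"
      using W_unit elim by (auto intro: LIMSEQ_le_const LIMSEQ_le_const2)
    ultimately show ?case
      by (simp add: Vs_def)
  qed
  have "(\<lambda>j. sq_dist (W j)) \<longlonglongrightarrow> sq_dist Vs"
    unfolding sq_dist_def
  proof (rule integral_bounded_convergence[where B=1])
    show "AE w in M. (\<lambda>j. (g w - W j w)\<^sup>2) \<longlonglongrightarrow> (g w - Vs w)\<^sup>2"
      using lim by eventually_elim (intro tendsto_intros)
    show "\<bar>(g w - W j w)\<^sup>2\<bar> \<le> 1" if "w \<in> space M" for j w
      using g_unit[of w] W_unit[OF that, of j] by (simp add: abs_square_le_1 abs_le_iff)
  qed measurable
  moreover have "(\<lambda>j. sq_dist (W j)) \<longlonglongrightarrow> min_sq_dist"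
  proof (rule tendsto_sandwich[where f="\<lambda>_. min_sq_dist" and h="\<lambda>j. min_sq_dist + (1/4)^j"])
    have "(\<lambda>j. min_sq_dist + (1/4::real)^j) \<longlonglongrightarrow> min_sq_dist + 0"
      by (intro tendsto_add LIMSEQ_power_zero) auto
    then show "(\<lambda>j. min_sq_dist + (1/4::real)^j) \<longlonglongrightarrow> min_sq_dist"
      by simp
    show "\<forall>\<^sub>F j in sequentially. min_sq_dist \<le> sq_dist (W j)"
      using min_sq_dist_le_unit_part[OF W(1)] by simp
    show "\<forall>\<^sub>F j in sequentially. sq_dist (W j) \<le> min_sq_dist + (1/4)^j"
      using W(2) by (simp add: less_imp_le)
  qed simp
  ultimately have "sq_dist Vs = min_sq_dist"
    by (rule LIMSEQ_unique)
  with that Vs_measurable Vs_unit W(1) lim show thesis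
    by blast
qed

lemma min_sq_dist_le_mixture:
  assumes Vs: "Vs \<in> borel_measurable M" "\<And>w. 0 \<le> Vs w \<and> Vs w \<le> 1"
    and W: "\<And>j. W j \<in> unit_part" "AE w in M. (\<lambda>j. W j w) \<longlonglongrightarrow> Vs w"
    and V: "V \<in> S" "\<And>w. w \<in> space M \<Longrightarrow> V w \<le> m"
    and t: "0 \<le> t" "t \<le> 1"
  shows "min_sq_dist \<le> sq_dist (\<lambda>w. t * V w + (1 - t) * Vs w)"
proof -
  note [measurable] = Vs(1) unit_partD(2)[OF W(1)] S_measurable[OF V(1)]
  define mix where "mix j w = t * V w + (1 - t) * W j w" for j w
  have mix_S: "mix j \<in> S" for j
    unfolding mix_def by (rule pointwise_convexD[OF convex_S V(1) unit_partD(1)[OF W(1)] t])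
  have mix_bound: "0 \<le> mix j w \<and> mix j w \<le> \<bar>m\<bar> + 1" if "w \<in> space M" for j w
  proof -
    have "t * V w \<le> 1 * \<bar>m\<bar>" "(1 - t) * W j w \<le> 1 * 1"
      using t V(2)[OF that] S_nonneg[OF V(1) that] unit_partD(3)[OF W(1) that, of j]
      by (intro mult_mono; simp)+
    then show ?thesis
      using t S_nonneg[OF V(1) that] unit_partD(3)[OF W(1) that, of j] by (simp add: mix_def)
  qed
  have "(\<lambda>j. sq_dist (mix j)) \<longlonglongrightarrow> sq_dist (\<lambda>w. t * V w + (1 - t) * Vs w)"
    unfolding sq_dist_def
  proof (rule integral_bounded_convergence[where B="(\<bar>m\<bar> + 2)\<^sup>2"])
    show "AE w in M. (\<lambda>j. (g w - mix j w)\<^sup>2) \<longlonglongrightarrow> (g w - (t * V w + (1 - t) * Vs w))\<^sup>2"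
      using W(2) unfolding mix_def by eventually_elim (intro tendsto_intros)
    show "\<bar>(g w - mix j w)\<^sup>2\<bar> \<le> (\<bar>m\<bar> + 2)\<^sup>2" if "w \<in> space M" for j w
    proof -
      have "\<bar>g w - mix j w\<bar> \<le> \<bar>m\<bar> + 2"
        using g_unit[of w] mix_bound[OF that, of j] by linarith
      from power_mono[OF this abs_ge_zero, of 2] show ?thesis by simp
    qed
  qed (auto simp: mix_def)
  moreover have "min_sq_dist \<le> sq_dist (mix j)" for j
    using mix_bound by (intro min_sq_dist_le[OF mix_S]) auto
  ultimately show ?thesis
    by (intro LIMSEQ_le_const) auto
qed

lemma sq_dist_mixture:
  assumes [measurable]: "U \<in> borel_measurable M" "V \<in> borel_measurable M"
    and bounded: "\<And>w. w \<in> space M \<Longrightarrow> \<bar>U w\<bar> \<le> m" "\<And>w. w \<in> space M \<Longrightarrow> \<bar>V w\<bar> \<le> m"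
  shows "sq_dist (\<lambda>w. t * V w + (1 - t) * U w)
    = sq_dist U - 2 * t * expectation (\<lambda>w. (g w - U w) * (V w - U w))
      + t\<^sup>2 * expectation (\<lambda>w. (V w - U w)\<^sup>2)"
proof -
  have gU: "\<bar>g w - U w\<bar> \<le> 1 + m" and VU: "\<bar>V w - U w\<bar> \<le> 2 * m" if "w \<in> space M" for w
    using g_unit[of w] bounded[OF that] by auto
  have "integrable M (\<lambda>w. (g w - U w) * (V w - U w))" "integrable M (\<lambda>w. (V w - U w)\<^sup>2)"
    "integrable M (\<lambda>w. (g w - U w)\<^sup>2)"
    unfolding power2_eq_square using gU VU by (auto intro!: integrable_mult_bounded)
  moreover have "sq_dist (\<lambda>w. t * V w + (1 - t) * U w) = expectation (\<lambda>w. (g w - U w)\<^sup>2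
      - 2 * t * ((g w - U w) * (V w - U w)) + t\<^sup>2 * (V w - U w)\<^sup>2)"
    unfolding sq_dist_def
    by (rule Bochner_Integration.integral_cong) (auto simp: power2_eq_square algebra_simps)
  ultimately show ?thesis
    by (simp add: sq_dist_def)
qed

text \<open>First-order optimality of \<open>Vs\<close> along the segments towards the bounded members of \<open>S\<close>.\<close>
lemma variational_inequality:
  assumes Vs: "Vs \<in> borel_measurable M" "\<And>w. 0 \<le> Vs w \<and> Vs w \<le> 1"
    and W: "\<And>j. W j \<in> unit_part" "AE w in M. (\<lambda>j. W j w) \<longlonglongrightarrow> Vs w"
    and dist: "sq_dist Vs = min_sq_dist"
    and V: "V \<in> S" "\<And>w. w \<in> space M \<Longrightarrow> V w \<le> m"
  shows "expectation (\<lambda>w. (g w - Vs w) * V w) \<le> expectation (\<lambda>w. (g w - Vs w) * Vs w)"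
proof -
  note [measurable] = Vs(1) S_measurable[OF V(1)]
  have V_bound: "\<bar>V w\<bar> \<le> \<bar>m\<bar> + 1" and Vs_bound: "\<bar>Vs w\<bar> \<le> \<bar>m\<bar> + 1" if "w \<in> space M" for w
    using V(2)[OF that] S_nonneg[OF V(1) that] Vs(2)[of w] by auto
  have "2 * t * expectation (\<lambda>w. (g w - Vs w) * (V w - Vs w))
      \<le> t\<^sup>2 * expectation (\<lambda>w. (V w - Vs w)\<^sup>2)" if t: "0 < t" "t \<le> 1" for t
    using min_sq_dist_le_mixture[OF Vs W V, of t] t dist
      sq_dist_mixture[OF Vs(1) S_measurable[OF V(1)] Vs_bound V_bound, of t]
    by simp
  then have "expectation (\<lambda>w. (g w - Vs w) * (V w - Vs w)) \<le> 0"
    by (rule nonpos_of_quadratic_bound)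
  moreover have "\<bar>g w - Vs w\<bar> \<le> 1" for w
    using g_unit[of w] Vs(2)[of w] by auto
  then have "integrable M (\<lambda>w. (g w - Vs w) * V w)" "integrable M (\<lambda>w. (g w - Vs w) * Vs w)"
    using V_bound Vs_bound by (auto intro!: integrable_mult_bounded)
  ultimately show ?thesis
    by (simp add: right_diff_distrib)
qed

text \<open>Since \<open>S\<close> is solid, testing the variational inequality with \<open>V 1\<^bsub>{g > Vs}\<^esub>\<close> bounds
  \<open>E[(g - Vs)\<^sup>+ V]\<close> uniformly over the bounded members \<open>V\<close> of \<open>S\<close>.\<close>
lemma exists_projection:
  obtains Vs where "Vs \<in> borel_measurable M" "\<And>w. 0 \<le> Vs w \<and> Vs w \<le> 1"
    "sq_dist Vs = min_sq_dist"
    "\<And>V m. V \<in> S \<Longrightarrow> (\<And>w. w \<in> space M \<Longrightarrow> V w \<le> m) \<Longrightarrow>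
      expectation (\<lambda>w. max (g w - Vs w) 0 * V w) \<le> expectation (\<lambda>w. (g w - Vs w) * Vs w)"
proof -
  obtain Vs W where Vs: "Vs \<in> borel_measurable M" "\<And>w. 0 \<le> Vs w \<and> Vs w \<le> 1"
    and W: "\<And>j. W j \<in> unit_part" "AE w in M. (\<lambda>j. W j w) \<longlonglongrightarrow> Vs w"
    and dist: "sq_dist Vs = min_sq_dist"
    by (rule exists_minimizer) blast
  have "expectation (\<lambda>w. max (g w - Vs w) 0 * V w) \<le> expectation (\<lambda>w. (g w - Vs w) * Vs w)"
    if V: "V \<in> S" "\<And>w. w \<in> space M \<Longrightarrow> V w \<le> m" for V m
  proof -
    note [measurable] = Vs(1) S_measurable[OF V(1)]
    define V' where "V' w = (if Vs w < g w then V w else 0)" for w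
    have [measurable]: "V' \<in> borel_measurable M"
      unfolding V'_def by measurable
    have "V' \<in> S"
      by (rule solidD[OF solid_S V(1)]) (auto simp: V'_def S_nonneg[OF V(1)])
    moreover have "V' w \<le> max m 0" if "w \<in> space M" for w
      using V(2)[OF that] by (auto simp: V'_def)
    ultimately have "expectation (\<lambda>w. (g w - Vs w) * V' w) \<le> expectation (\<lambda>w. (g w - Vs w) * Vs w)"
      by (rule variational_inequality[OF Vs W dist])
    moreover have "(\<lambda>w. (g w - Vs w) * V' w) = (\<lambda>w. max (g w - Vs w) 0 * V w)"
      by (auto simp: V'_def max_def)
    ultimately show ?thesis
      by simp
  qed
  with that Vs dist show thesis
    by blast
qed

end

lemma nn_integral_le_of_truncations:
  fixes Y :: "'a \<Rightarrow> real"
  assumes [measurable]: "Y \<in> borel_measurable M"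
    and bound: "\<And>m::nat. (\<integral>\<^sup>+w. ennreal (min (Y w) (real m)) \<partial>M) \<le> K"
  shows "(\<integral>\<^sup>+w. ennreal (Y w) \<partial>M) \<le> K"
proof -
  have "ennreal (Y w) = (SUP m. ennreal (min (Y w) (real m)))" for w
  proof (rule antisym)
    obtain m :: nat where "Y w \<le> real m"
      using real_arch_simple by blast
    then have "ennreal (Y w) = ennreal (min (Y w) (real m))"
      by simp
    then show "ennreal (Y w) \<le> (SUP m. ennreal (min (Y w) (real m)))"
      by (metis UNIV_I SUP_upper)
  qed (auto intro!: SUP_least ennreal_leI)
  then have "(\<integral>\<^sup>+w. ennreal (Y w) \<partial>M) = (\<integral>\<^sup>+w. (SUP m. ennreal (min (Y w) (real m))) \<partial>M)"
    by simp
  also have "\<dots> = (SUP m. \<integral>\<^sup>+w. ennreal (min (Y w) (real m)) \<partial>M)"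
    by (rule nn_integral_monotone_convergence_SUP)
      (auto intro!: incseq_SucI le_funI ennreal_leI)
  also have "\<dots> \<le> K"
    by (rule SUP_least) (rule bound)
  finally show ?thesis .
qed

context prob_space
begin

lemma prob_below_half_le:
  assumes [measurable]: "A \<in> events" "V \<in> borel_measurable M"
    and V: "\<And>w. w \<in> space M \<Longrightarrow> 0 \<le> V w \<and> V w \<le> 1"
  shows "prob (A \<inter> {w\<in>space M. V w < 1/2}) \<le> 4 * expectation (\<lambda>w. (indicator A w - V w)\<^sup>2)"
proof -
  let ?E = "A \<inter> {w\<in>space M. V w < 1/2}"
  have "prob ?E = expectation (indicator ?E)"
    by simp
  also have "\<dots> \<le> expectation (\<lambda>w. 4 * (indicator A w - V w)\<^sup>2)"
  proof (rule integral_mono)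
    show "integrable M (indicator ?E :: 'a \<Rightarrow> real)"
      by (intro integrable_bounded[where B=1]) (auto split: split_indicator)
    show "integrable M (\<lambda>w. 4 * (indicator A w - V w)\<^sup>2)"
    proof (rule integrable_bounded)
      show "\<bar>4 * (indicator A w - V w)\<^sup>2\<bar> \<le> 4" if "w \<in> space M" for w
        using V[OF that] by (auto split: split_indicator simp: abs_square_le_1 abs_le_iff)
    qed measurable
    show "indicator ?E w \<le> 4 * (indicator A w - V w)\<^sup>2" if "w \<in> space M" for w
    proof (cases "w \<in> ?E")
      case True
      then have "1/2 \<le> indicator A w - V w"
        using V[OF that] by simp
      from power_mono[OF this, of 2] True show ?thesis
        by (simp add: power2_eq_square)
    qed simp
  qed
  finally show ?thesis
    by simp
qed

lemma prob_Diff_geometric_Union_pos: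
  assumes [measurable]: "A \<in> events" "\<And>N. E N \<in> events"
    and A_pos: "0 < prob A" and E: "\<And>N::nat. prob (E N) \<le> prob A / 4 * (1/2)^N"
  shows "0 < prob (A - (\<Union>N. E N))"
proof -
  have geometric: "(\<lambda>N. prob A / 4 * (1/2)^N) sums (prob A / 2)"
    using sums_mult[OF geometric_sums[of "1/2::real"], of "prob A / 4"] by simp
  have summable_E: "summable (\<lambda>N. prob (E N))"
    by (rule summable_comparison_test'[OF sums_summable[OF geometric]]) (use E in auto)
  have "prob (\<Union>N. E N) \<le> (\<Sum>N. prob (E N))"
    using summable_E by (intro finite_measure_subadditive_countably) auto
  also have "\<dots> \<le> (\<Sum>N. prob A / 4 * (1/2)^N)"
    by (rule suminf_le[OF E summable_E sums_summable[OF geometric]])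
  also have "\<dots> = prob A / 2"
    using geometric by (simp add: sums_iff)
  finally have "prob (\<Union>N. E N) \<le> prob A / 2" .
  moreover have "prob A \<le> prob (A - (\<Union>N. E N)) + prob (\<Union>N. E N)"
  proof -
    have "prob A \<le> prob ((A - (\<Union>N. E N)) \<union> (\<Union>N. E N))"
      by (intro finite_measure_mono) auto
    also have "\<dots> \<le> prob (A - (\<Union>N. E N)) + prob (\<Union>N. E N)"
      by (intro measure_Un_le) auto
    finally show ?thesis .
  qed
  ultimately show ?thesis
    using A_pos by simp
qed

text \<open>Otherwise \<open>1\<^sub>A\<close> is approximated in \<open>L\<^sup>2\<close> by some \<open>V\<^sub>N \<le> 1\<close> in every \<open>S N\<close>, so fast that the sets
  \<open>A \<inter> {V\<^sub>N < 1/2}\<close> miss a non-null \<open>A' \<subseteq> A\<close>; then \<open>1\<^sub>A\<^sub>'/2 \<le> V\<^sub>N\<close> lies in every \<open>S N\<close>.\<close>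
lemma indicator_separated_from_unit_parts:
  fixes S :: "nat \<Rightarrow> ('a \<Rightarrow> real) set"
  assumes S: "\<And>N. S N \<subseteq> L0plus M" "\<And>N. solid M (S N)"
    and null: "\<And>Y. Y \<in> L0plus M \<Longrightarrow> (\<And>N. Y \<in> S N) \<Longrightarrow> AE w in M. Y w = 0"
    and A[measurable]: "A \<in> events" and A_pos: "0 < prob A"
  obtains N \<delta> where "0 < \<delta>"
    "\<And>V. V \<in> S N \<Longrightarrow> (\<And>w. w \<in> space M \<Longrightarrow> V w \<le> 1) \<Longrightarrow>
      \<delta> \<le> expectation (\<lambda>w. (indicator A w - V w)\<^sup>2)"
proof -
  have "\<exists>N. \<forall>V\<in>S N. (\<forall>w\<in>space M. V w \<le> 1) \<longrightarrow>
      prob A / 16 * (1/2)^N \<le> expectation (\<lambda>w. (indicator A w - V w)\<^sup>2)"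
  proof (rule ccontr)
    assume "\<not> ?thesis"
    then have "\<forall>N. \<exists>V. V \<in> S N \<and> (\<forall>w\<in>space M. V w \<le> 1) \<and>
        expectation (\<lambda>w. (indicator A w - V w)\<^sup>2) < prob A / 16 * (1/2)^N"
      by (auto simp: not_le)
    then obtain V where V: "\<And>N. V N \<in> S N" "\<And>N w. w \<in> space M \<Longrightarrow> V N w \<le> 1"
      "\<And>N. expectation (\<lambda>w. (indicator A w - V N w)\<^sup>2) < prob A / 16 * (1/2)^N"
      by metis
    have V_L0plus: "V N \<in> L0plus M" for N
      using V(1) S(1) by blast
    note [measurable] = L0plusD(1)[OF V_L0plus]
    define E where "E N = A \<inter> {w\<in>space M. V N w < 1/2}" for N
    have [measurable]: "E N \<in> events" for N
      unfolding E_def by measurable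
    have "prob (E N) \<le> prob A / 4 * (1/2)^N" for N
    proof -
      have "prob (E N) \<le> 4 * expectation (\<lambda>w. (indicator A w - V N w)\<^sup>2)"
        unfolding E_def using L0plusD(2)[OF V_L0plus] V(2) by (intro prob_below_half_le) auto
      with V(3)[of N] show ?thesis
        by simp
    qed
    then have "0 < prob (A - (\<Union>N. E N))"
      using A_pos by (intro prob_Diff_geometric_Union_pos) auto
    define Y where "Y w = indicator (A - (\<Union>N. E N)) w / (2::real)" for w
    have [measurable]: "Y \<in> borel_measurable M"
      unfolding Y_def by measurable
    have "Y \<in> L0plus M"
      unfolding L0plus_def Y_def by simp
    moreover have "Y \<in> S N" for N
    proof (rule solidD[OF S(2) V(1)])
      show "0 \<le> Y w \<and> Y w \<le> V N w" if "w \<in> space M" for w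
        using that L0plusD(2)[OF V_L0plus that]
        by (auto simp: Y_def E_def not_less split: split_indicator)
    qed measurable
    ultimately have "AE w in M. Y w = 0"
      by (rule null)
    then have "AE w in M. w \<notin> A - (\<Union>N. E N)"
      by eventually_elim (auto simp: Y_def split: split_indicator_asm)
    with \<open>0 < prob (A - (\<Union>N. E N))\<close> show False
      by (subst (asm) prob_eq_0[symmetric]) auto
  qed
  then obtain N where "\<forall>V\<in>S N. (\<forall>w\<in>space M. V w \<le> 1) \<longrightarrow>
      prob A / 16 * (1/2)^N \<le> expectation (\<lambda>w. (indicator A w - V w)\<^sup>2)" ..
  with A_pos show thesis
    by (intro that[of "prob A / 16 * (1/2)^N" N]) auto
qed

lemma exists_positive_level_set:
  fixes f :: "'a \<Rightarrow> real"
  assumes [measurable]: "f \<in> borel_measurable M" "A \<in> events"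
    and not_AE: "\<not> (AE w in M. w \<in> A \<longrightarrow> f w \<le> 0)"
  obtains \<epsilon> where "0 < \<epsilon>" "0 < prob (A \<inter> {w\<in>space M. \<epsilon> \<le> f w})"
proof (rule ccontr)
  assume "\<not> thesis"
  then have "\<not> 0 < prob (A \<inter> {w\<in>space M. 1 / Suc n \<le> f w})" for n :: nat
    using that[of "1 / Suc n"] by auto
  then have "prob (A \<inter> {w\<in>space M. 1 / Suc n \<le> f w}) = 0" for n :: nat
    using measure_nonneg[of M "A \<inter> {w\<in>space M. 1 / Suc n \<le> f w}"] by (meson antisym not_less)
  then have "AE w in M. w \<notin> A \<inter> {w\<in>space M. 1 / Suc n \<le> f w}" for n :: nat
    by (subst prob_eq_0[symmetric]) auto
  then have "AE w in M. \<forall>n::nat. w \<notin> A \<inter> {w\<in>space M. 1 / Suc n \<le> f w}"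
    by (subst AE_all_countable) blast
  then have "AE w in M. w \<in> A \<longrightarrow> f w \<le> 0"
    using AE_space
  proof (eventually_elim, intro impI)
    case (elim w)
    show "f w \<le> 0" if "w \<in> A"
    proof (rule ccontr)
      assume "\<not> f w \<le> 0"
      then obtain n :: nat where "0 < n" "inverse n < f w"
        using ex_inverse_of_nat_less by (meson not_le)
      then have "1 / Suc (n - 1) \<le> f w"
        by (simp add: inverse_eq_divide)
      with elim \<open>w \<in> A\<close> show False
        by blast
    qed
  qed
  with not_AE show False ..
qed

lemma nn_integral_indicator_le_of_positive_part_bound:
  assumes S: "S \<subseteq> L0plus M" "solid M S"
    and [measurable]: "h \<in> borel_measurable M" and h_bound: "\<And>w. \<bar>h w\<bar> \<le> 1"
    and bound: "\<And>V m. V \<in> S \<Longrightarrow> (\<And>w. w \<in> space M \<Longrightarrow> V w \<le> m) \<Longrightarrow>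
      expectation (\<lambda>w. max (h w) 0 * V w) \<le> c"
    and [measurable]: "B \<in> events" and level: "\<And>w. w \<in> B \<Longrightarrow> \<epsilon> \<le> h w" and \<epsilon>: "0 < \<epsilon>"
    and Y: "Y \<in> S"
  shows "(\<integral>\<^sup>+w. ennreal (Y w * indicator B w) \<partial>M) \<le> ennreal (c / \<epsilon>)"
proof (rule nn_integral_le_of_truncations)
  have Y_L0plus: "Y \<in> L0plus M"
    using subsetD[OF S(1) Y] .
  note [measurable] = L0plusD(1)[OF Y_L0plus]
  show "(\<lambda>w. Y w * indicator B w) \<in> borel_measurable M"
    by measurable
  fix m :: nat
  define V where "V w = min (Y w) (real m)" for w
  have [measurable]: "V \<in> borel_measurable M"
    unfolding V_def by measurable
  have V_bound: "0 \<le> V w \<and> V w \<le> real m" if "w \<in> space M" for w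
    using L0plusD(2)[OF Y_L0plus that] by (simp add: V_def)
  have "V \<in> S"
    by (rule solidD[OF S(2) Y]) (use V_bound in \<open>auto simp: V_def\<close>)
  have "integrable M (\<lambda>w. max (h w) 0 * V w)"
  proof (rule integrable_mult_bounded)
    show "\<bar>max (h w) 0\<bar> \<le> 1" for w
      using h_bound[of w] by auto
    show "\<bar>V w\<bar> \<le> real m" if "w \<in> space M" for w
      using V_bound[OF that] by auto
  qed measurable
  then have integrable: "integrable M (\<lambda>w. max (h w) 0 * V w / \<epsilon>)"
    by simp
  have "(\<integral>\<^sup>+w. ennreal (min (Y w * indicator B w) (real m)) \<partial>M)
      \<le> (\<integral>\<^sup>+w. ennreal (max (h w) 0 * V w / \<epsilon>) \<partial>M)"
  proof (intro nn_integral_mono ennreal_leI)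
    fix w assume w: "w \<in> space M"
    show "min (Y w * indicator B w) (real m) \<le> max (h w) 0 * V w / \<epsilon>"
    proof (cases "w \<in> B")
      case True
      have "\<epsilon> * V w \<le> max (h w) 0 * V w"
        using level[OF True] V_bound[OF w] by (intro mult_right_mono) auto
      with True \<epsilon> show ?thesis
        by (simp add: V_def field_simps)
    qed (use V_bound[OF w] \<epsilon> in simp)
  qed
  also have "\<dots> = ennreal (expectation (\<lambda>w. max (h w) 0 * V w) / \<epsilon>)"
    using integrable V_bound \<epsilon> by (subst nn_integral_eq_integral) auto
  also have "\<dots> \<le> ennreal (c / \<epsilon>)"
    using bound[OF \<open>V \<in> S\<close>, of "real m"] V_bound \<epsilon> by (intro ennreal_leI divide_right_mono) auto
  finally show "(\<integral>\<^sup>+w. ennreal (min (Y w * indicator B w) (real m)) \<partial>M) \<le> ennreal (c / \<epsilon>)" .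
qed

text \<open>For \<open>h = 1\<^sub>A - Vs\<close> with \<open>Vs\<close> the projection of \<open>1\<^sub>A\<close>, \<open>E[h 1\<^sub>A] = E[h\<^sup>2] + E[h Vs] > E[h Vs] \<ge> 0\<close> as
  \<open>E[h\<^sup>2] \<ge> \<delta>\<close>; so \<open>h \<ge> \<epsilon>\<close> on a non-null \<open>B \<subseteq> A\<close>, where \<open>Y \<le> h\<^sup>+ Y / \<epsilon>\<close>.\<close>
lemma exists_subset_bounding_solid_convex:
  assumes S: "S \<subseteq> L0plus M" "solid M S" "pointwise_convex S" "S \<noteq> {}"
    and A[measurable]: "A \<in> events"
    and separated: "0 < \<delta>" "\<And>V. V \<in> S \<Longrightarrow> (\<And>w. w \<in> space M \<Longrightarrow> V w \<le> 1) \<Longrightarrow>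
      \<delta> \<le> expectation (\<lambda>w. (indicator A w - V w)\<^sup>2)"
  obtains B K where "B \<in> events" "B \<subseteq> A" "0 < prob B"
    "\<And>Y. Y \<in> S \<Longrightarrow> (\<integral>\<^sup>+w. ennreal (Y w * indicator B w) \<partial>M) \<le> ennreal K"
proof -
  interpret projection_problem M S "indicator A"
    using S by unfold_locales (auto split: split_indicator)
  obtain Vs where Vs[measurable]: "Vs \<in> borel_measurable M"
    and Vs_unit: "\<And>w. 0 \<le> Vs w \<and> Vs w \<le> 1" and dist: "sq_dist Vs = min_sq_dist"
    and positive_part: "\<And>V m. V \<in> S \<Longrightarrow> (\<And>w. w \<in> space M \<Longrightarrow> V w \<le> m) \<Longrightarrow>
      expectation (\<lambda>w. max (indicator A w - Vs w) 0 * V w) \<le> expectation (\<lambda>w. (indicator A w - Vs w) * Vs w)"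
    by (rule exists_projection) blast
  define h where "h w = indicator A w - Vs w" for w
  define c where "c = expectation (\<lambda>w. h w * Vs w)"
  have h_measurable[measurable]: "h \<in> borel_measurable M"
    unfolding h_def by measurable
  have h_bound: "\<bar>h w\<bar> \<le> 1" for w
    using Vs_unit[of w] unfolding h_def by (auto split: split_indicator)
  note positive_part = positive_part[folded h_def, folded c_def]
  have "0 \<le> c"
    using positive_part[OF unit_partD(1)[OF zero_in_unit_part], of 0] by simp
  have "\<delta> \<le> min_sq_dist"
    unfolding min_sq_dist_def using zero_in_unit_part separated(2)
    by (intro cINF_greatest) (auto simp: unit_part_def sq_dist_def)
  have "expectation (\<lambda>w. h w * indicator A w) = expectation (\<lambda>w. (h w)\<^sup>2 + h w * Vs w)"
    by (rule Bochner_Integration.integral_cong) (auto simp: h_def power2_eq_square algebra_simps)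
  also have "\<dots> = min_sq_dist + c"
  proof -
    have "integrable M (\<lambda>w. h w * Vs w)"
      by (rule integrable_mult_bounded[where A=1 and B=1]) (use h_bound Vs_unit in auto)
    then show ?thesis
      using integrable_sq_dist[OF Vs, of 1] Vs_unit dist by (simp add: c_def sq_dist_def h_def)
  qed
  finally have "c < expectation (\<lambda>w. h w * indicator A w)"
    using \<open>\<delta> \<le> min_sq_dist\<close> separated(1) by simp
  have "\<not> (AE w in M. w \<in> A \<longrightarrow> h w \<le> 0)"
  proof
    assume "AE w in M. w \<in> A \<longrightarrow> h w \<le> 0"
    then have "0 \<le> expectation (\<lambda>w. - (h w * indicator A w))"
      by (intro integral_nonneg_AE) (auto elim!: eventually_mono split: split_indicator)
    with \<open>0 \<le> c\<close> \<open>c < expectation (\<lambda>w. h w * indicator A w)\<close> show False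
      by simp
  qed
  then obtain \<epsilon> where \<epsilon>: "0 < \<epsilon>" "0 < prob (A \<inter> {w\<in>space M. \<epsilon> \<le> h w})"
    by (rule exists_positive_level_set[rotated 2]) auto
  have B: "A \<inter> {w\<in>space M. \<epsilon> \<le> h w} \<in> events"
    by measurable
  show thesis
  proof (rule that[OF B _ \<epsilon>(2)])
    show "(\<integral>\<^sup>+w. ennreal (Y w * indicator (A \<inter> {w\<in>space M. \<epsilon> \<le> h w}) w) \<partial>M) \<le> ennreal (c / \<epsilon>)"
      if "Y \<in> S" for Y
      by (rule nn_integral_indicator_le_of_positive_part_bound[OF S(1,2) h_measurable h_bound
            positive_part B _ \<epsilon>(1) that]) auto
  qed auto
qed

end

definition uniformly_bounded_on :: "'a measure \<Rightarrow> ('a \<Rightarrow> real) set \<Rightarrow> 'a set \<Rightarrow> bool" where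
  "uniformly_bounded_on M F B \<longleftrightarrow>
    B \<in> sets M \<and> (\<exists>K\<ge>0. \<forall>X\<in>F. (\<integral>\<^sup>+w. ennreal (X w * indicator B w) \<partial>M) \<le> ennreal K)"

lemma uniformly_bounded_on_empty: "uniformly_bounded_on M F {}"
  unfolding uniformly_bounded_on_def by auto

lemma uniformly_bounded_on_Un:
  assumes F: "F \<subseteq> borel_measurable M"
    and B1: "uniformly_bounded_on M F B1" and B2: "uniformly_bounded_on M F B2"
  shows "uniformly_bounded_on M F (B1 \<union> B2)"
proof -
  obtain K1 K2 where B: "B1 \<in> sets M" "B2 \<in> sets M" and K: "0 \<le> K1" "0 \<le> K2"
    and K1: "\<And>X. X \<in> F \<Longrightarrow> (\<integral>\<^sup>+w. ennreal (X w * indicator B1 w) \<partial>M) \<le> ennreal K1"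
    and K2: "\<And>X. X \<in> F \<Longrightarrow> (\<integral>\<^sup>+w. ennreal (X w * indicator B2 w) \<partial>M) \<le> ennreal K2"
    using B1 B2 unfolding uniformly_bounded_on_def by blast
  have bound: "(\<integral>\<^sup>+w. ennreal (X w * indicator (B1 \<union> B2) w) \<partial>M) \<le> ennreal (K1 + K2)"
    if X: "X \<in> F" for X
  proof -
    note [measurable] = subsetD[OF F X] B
    have "(\<integral>\<^sup>+w. ennreal (X w * indicator (B1 \<union> B2) w) \<partial>M)
        \<le> (\<integral>\<^sup>+w. ennreal (X w * indicator B1 w) + ennreal (X w * indicator B2 w) \<partial>M)"
      by (intro nn_integral_mono) (auto simp: ennreal_plus[symmetric] simp del: ennreal_plus
          intro!: ennreal_leI split: split_indicator)
    also have "\<dots> = (\<integral>\<^sup>+w. ennreal (X w * indicator B1 w) \<partial>M) + (\<integral>\<^sup>+w. ennreal (X w * indicator B2 w) \<partial>M)"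
      by (intro nn_integral_add) auto
    also have "\<dots> \<le> ennreal K1 + ennreal K2"
      using K1[OF X] K2[OF X] by (rule add_mono)
    also have "\<dots> = ennreal (K1 + K2)"
      using K by (simp add: ennreal_plus)
    finally show ?thesis .
  qed
  show ?thesis
    unfolding uniformly_bounded_on_def using B K bound by (intro conjI exI[of _ "K1 + K2"] ballI) auto
qed

context prob_space
begin

lemma exists_uniformly_bounded_subset:
  assumes XX: "XX \<subseteq> L0plus M"
    and null: "\<forall>Y\<in>L0plus M. (\<forall>n. Y \<in> O_set M XX n) \<longleftrightarrow> (AE w in M. Y w = 0)"
    and A: "A \<in> events" "0 < prob A"
  shows "\<exists>B\<subseteq>A. uniformly_bounded_on M XX B \<and> 0 < prob B"
proof -
  obtain N \<delta> where \<delta>: "0 < \<delta>" "\<And>V. V \<in> O_set M XX N \<Longrightarrow> (\<And>w. w \<in> space M \<Longrightarrow> V w \<le> 1) \<Longrightarrow>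
      \<delta> \<le> expectation (\<lambda>w. (indicator A w - V w)\<^sup>2)"
  proof (rule indicator_separated_from_unit_parts[of "O_set M XX", OF O_set_subset_L0plus solid_O_set _ A])
    show "AE w in M. Y w = 0" if "Y \<in> L0plus M" "\<And>N. Y \<in> O_set M XX N" for Y
      using null that by blast
  qed blast
  have "(\<lambda>_. 0) \<in> L0plus M"
    unfolding L0plus_def by simp
  then have "\<forall>n. (\<lambda>_. 0) \<in> O_set M XX n"
    using bspec[OF null] by simp
  then have "O_set M XX N \<noteq> {}"
    by blast
  then obtain B K where B[measurable]: "B \<in> events" "B \<subseteq> A" "0 < prob B"
    and K: "\<And>Y. Y \<in> O_set M XX N \<Longrightarrow> (\<integral>\<^sup>+w. ennreal (Y w * indicator B w) \<partial>M) \<le> ennreal K"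
    by (rule exists_subset_bounding_solid_convex[OF O_set_subset_L0plus solid_O_set pointwise_convex_O_set
        _ A(1) \<delta>]) blast+
  have bound: "(\<integral>\<^sup>+w. ennreal (X w * indicator B w) \<partial>M) \<le> ennreal (real N + max K 0)"
    if X: "X \<in> XX" for X
  proof -
    have [measurable]: "X \<in> borel_measurable M"
      using L0plusD(1) subsetD[OF XX X] .
    have "(\<integral>\<^sup>+w. ennreal (X w * indicator B w) \<partial>M)
        \<le> (\<integral>\<^sup>+w. ennreal (real N) + ennreal (max (X w - real N) 0 * indicator B w) \<partial>M)"
      by (intro nn_integral_mono) (auto simp: ennreal_plus[symmetric] simp del: ennreal_plus
          intro!: ennreal_leI split: split_indicator)
    also have "\<dots> = ennreal (real N) + (\<integral>\<^sup>+w. ennreal (max (X w - real N) 0 * indicator B w) \<partial>M)"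
      by (subst nn_integral_add) (auto simp: emeasure_space_1)
    also have "\<dots> \<le> ennreal (real N) + ennreal (max K 0)"
      using K[OF shift_in_O_set[OF X]] by (intro add_left_mono) (auto simp: max_def ennreal_neg)
    also have "\<dots> = ennreal (real N + max K 0)"
      by (simp add: ennreal_plus)
    finally show ?thesis .
  qed
  have "uniformly_bounded_on M XX B"
    unfolding uniformly_bounded_on_def using B(1) bound
    by (intro conjI exI[of _ "real N + max K 0"] ballI) auto
  with B(2,3) show ?thesis
    by blast
qed

lemma countable_exhaustion:
  assumes P: "P {}" "\<And>B1 B2. P B1 \<Longrightarrow> P B2 \<Longrightarrow> P (B1 \<union> B2)" "\<And>B. P B \<Longrightarrow> B \<in> events"
    and local: "\<And>A. A \<in> events \<Longrightarrow> 0 < prob A \<Longrightarrow> \<exists>B\<subseteq>A. P B \<and> 0 < prob B"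
  obtains Bs :: "nat \<Rightarrow> 'a set" where "\<And>j. P (Bs j)" "AE w in M. \<exists>j. w \<in> Bs j"
proof -
  define s where "s = Sup (prob ` {B. P B})"
  have bdd: "bdd_above (prob ` {B. P B})"
    by (intro bdd_aboveI[of _ 1]) auto
  have "\<exists>B. P B \<and> s - 1 / Suc j < prob B" for j :: nat
  proof -
    have "s - 1 / Suc j < s"
      by simp
    then show ?thesis
      unfolding s_def using P(1) bdd by (subst (asm) less_cSup_iff) auto
  qed
  then obtain Bs where Bs: "\<And>j. P (Bs j)" "\<And>j. s - 1 / Suc j < prob (Bs j)"
    by metis
  note [measurable] = P(3)[OF Bs(1)]
  have "prob (space M - (\<Union>j. Bs j)) = 0"
  proof (rule ccontr)
    assume "prob (space M - (\<Union>j. Bs j)) \<noteq> 0"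
    then have "0 < prob (space M - (\<Union>j. Bs j))"
      using measure_nonneg[of M "space M - (\<Union>j. Bs j)"] by linarith
    then obtain B where B: "B \<subseteq> space M - (\<Union>j. Bs j)" "P B" "0 < prob B"
      using local[of "space M - (\<Union>j. Bs j)"] by auto
    note [measurable] = P(3)[OF B(2)]
    have "prob B < 1 / Suc j" for j
    proof -
      have "prob B + prob (Bs j) = prob (B \<union> Bs j)"
        using B(1) by (intro finite_measure_Union[symmetric]) auto
      also have "\<dots> \<le> s"
        unfolding s_def using P(2)[OF B(2) Bs(1)] bdd by (intro cSup_upper) auto
      finally show ?thesis
        using Bs(2)[of j] by simp
    qed
    moreover obtain j :: nat where "1 / Suc j < prob B"
      using B(3) ex_inverse_of_nat_less[of "prob B"]
      by (metis Suc_pred inverse_eq_divide)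
    ultimately show False
      by (meson not_less_iff_gr_or_eq order.strict_trans)
  qed
  then have "AE w in M. w \<notin> space M - (\<Union>j. Bs j)"
    by (subst prob_eq_0[symmetric]) auto
  then have "AE w in M. \<exists>j. w \<in> Bs j"
    by (auto elim!: eventually_mono[OF AE_space[THEN eventually_conj]])
  with Bs(1) that show thesis
    by blast
qed


lemma nn_integral_suminf_indicator_mult:
  assumes [measurable]: "\<And>j. B j \<in> sets M" "X \<in> borel_measurable M"
  shows "(\<integral>\<^sup>+w. (\<Sum>j. ennreal (a j) * indicator (B j) w) * ennreal (X w) \<partial>M)
    = (\<Sum>j. ennreal (a j) * (\<integral>\<^sup>+w. ennreal (X w * indicator (B j) w) \<partial>M))"
proof -
  have "(\<integral>\<^sup>+w. (\<Sum>j. ennreal (a j) * indicator (B j) w) * ennreal (X w) \<partial>M)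
      = (\<integral>\<^sup>+w. (\<Sum>j. ennreal (a j) * ennreal (X w * indicator (B j) w)) \<partial>M)"
    unfolding ennreal_suminf_multc[symmetric]
    by (intro nn_integral_cong suminf_cong) (simp split: split_indicator)
  also have "\<dots> = (\<Sum>j. ennreal (a j) * (\<integral>\<^sup>+w. ennreal (X w * indicator (B j) w) \<partial>M))"
    by (simp add: nn_integral_suminf nn_integral_cmult)
  finally show ?thesis .
qed

text \<open>The density \<open>\<Sum>\<^sub>j a\<^sub>j 1\<^bsub>B\<^sub>j\<^esub>\<close>, with weights \<open>a\<^sub>j = 2\<^sup>-\<^sup>j\<^sup>-\<^sup>1 / (1 + K\<^sub>j)\<close> compensating the bounds \<open>K\<^sub>j\<close> on \<open>B\<^sub>j\<close>.\<close>
lemma exists_density_bounding: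
  assumes F: "F \<subseteq> borel_measurable M"
    and Bs: "\<And>j::nat. uniformly_bounded_on M F (Bs j)" and cover: "AE w in M. \<exists>j. w \<in> Bs j"
  obtains f where "f \<in> borel_measurable M" "\<And>w. f w \<le> 1" "AE w in M. 0 < f w"
    "\<And>X. X \<in> F \<Longrightarrow> (\<integral>\<^sup>+w. f w * ennreal (X w) \<partial>M) \<le> 1"
proof -
  have "\<forall>j. \<exists>K\<ge>0. \<forall>X\<in>F. (\<integral>\<^sup>+w. ennreal (X w * indicator (Bs j) w) \<partial>M) \<le> ennreal K"
    using Bs unfolding uniformly_bounded_on_def by blast
  then obtain K where K: "\<And>j. 0 \<le> K j"
    "\<And>j X. X \<in> F \<Longrightarrow> (\<integral>\<^sup>+w. ennreal (X w * indicator (Bs j) w) \<partial>M) \<le> ennreal (K j)"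
    by metis
  have Bs_events[measurable]: "Bs j \<in> events" for j
    using Bs unfolding uniformly_bounded_on_def by blast
  define a where "a j = (1/2)^Suc j / (1 + K j)" for j
  have a_pos: "0 < a j" for j
    using K(1)[of j] by (simp add: a_def add_pos_nonneg)
  have a_eq: "a j * (1 + K j) = (1/2)^Suc j" for j
    using K(1)[of j] by (simp add: a_def del: power_Suc)
  have a_le: "a j \<le> (1/2)^Suc j" and a_K: "a j * K j \<le> (1/2)^Suc j" for j
    using a_eq[of j, unfolded distrib_left mult_1_right] a_pos[of j] K(1)[of j]
      mult_nonneg_nonneg[of "a j" "K j"] by linarith+
  have geometric: "(\<Sum>j. ennreal ((1/2)^Suc j)) = 1"
  proof -
    have "(\<lambda>j. (1/2::real)^Suc j) sums 1"
      using sums_mult[OF geometric_sums[of "1/2::real"], of "1/2"] by simp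
    then show ?thesis
      by (simp add: suminf_ennreal2 sums_iff del: power_Suc)
  qed
  define f where "f w = (\<Sum>j. ennreal (a j) * indicator (Bs j) w)" for w
  have "f w \<le> 1" for w
  proof -
    have "f w \<le> (\<Sum>j. ennreal ((1/2)^Suc j))"
      unfolding f_def using a_le
      by (intro suminf_le summableI) (auto split: split_indicator intro: ennreal_leI)
    with geometric show ?thesis by simp
  qed
  moreover have "AE w in M. 0 < f w"
    using cover
  proof eventually_elim
    case (elim w)
    then obtain j where "w \<in> Bs j" ..
    then have "0 < ennreal (a j) * indicator (Bs j) w"
      using a_pos[of j] by simp
    also have "\<dots> \<le> f w"
      unfolding f_def
      using sum_le_suminf[OF summableI, of "{j}" "\<lambda>i. ennreal (a i) * indicator (Bs i) w"]
      by (simp only: sum.insert_remove finite.emptyI sum.empty) simp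
    finally show ?case .
  qed
  moreover have "(\<integral>\<^sup>+w. f w * ennreal (X w) \<partial>M) \<le> 1" if X: "X \<in> F" for X
  proof -
    have "(\<integral>\<^sup>+w. f w * ennreal (X w) \<partial>M)
        = (\<Sum>j. ennreal (a j) * (\<integral>\<^sup>+w. ennreal (X w * indicator (Bs j) w) \<partial>M))"
      unfolding f_def by (rule nn_integral_suminf_indicator_mult[OF Bs_events subsetD[OF F X]])
    also have "\<dots> \<le> (\<Sum>j. ennreal ((1/2)^Suc j))"
    proof (intro suminf_le summableI)
      fix j
      have "ennreal (a j) * (\<integral>\<^sup>+w. ennreal (X w * indicator (Bs j) w) \<partial>M) \<le> ennreal (a j) * ennreal (K j)"
        using K(2)[OF X] by (rule mult_left_mono) simp
      also have "\<dots> = ennreal (a j * K j)"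
        using a_pos[of j] K(1)[of j] by (simp add: ennreal_mult)
      also have "\<dots> \<le> ennreal ((1/2)^Suc j)"
        using a_K[of j] by (rule ennreal_leI)
      finally show "ennreal (a j) * (\<integral>\<^sup>+w. ennreal (X w * indicator (Bs j) w) \<partial>M) \<le> ennreal ((1/2)^Suc j)" .
    qed
    finally show ?thesis
      using geometric by simp
  qed
  moreover have "f \<in> borel_measurable M"
    unfolding f_def by measurable
  ultimately show thesis
    using that by blast
qed

lemma density_in_M0plus_equivalent:
  assumes [measurable]: "f \<in> borel_measurable M"
    and f_le: "\<And>w. f w \<le> 1" and f_pos: "AE w in M. 0 < f w"
  shows "density M f \<in> M0plus M" "absolutely_continuous (density M f) M"
proof -
  have "(\<integral>\<^sup>+w. f w \<partial>M) \<le> (\<integral>\<^sup>+w. 1 \<partial>M)"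
    using f_le by (intro nn_integral_mono) auto
  then have "emeasure (density M f) (space M) \<le> 1"
    by (simp add: emeasure_density emeasure_space_1)
  then have "finite_measure (density M f)"
    by (intro finite_measureI) (auto simp: top_unique)
  then have "sigma_finite_measure (density M f)"
    by (simp add: finite_measure_def)
  moreover have "absolutely_continuous M (density M f)"
    by (rule absolutely_continuousI_density) simp
  ultimately show "density M f \<in> M0plus M"
    unfolding M0plus_def by simp
  show "absolutely_continuous (density M f) M"
    unfolding absolutely_continuous_def
  proof
    fix A assume "A \<in> null_sets (density M f)"
    then have A: "A \<in> events" "AE w in M. w \<in> A \<longrightarrow> f w = 0"
      using null_sets_density_iff[of f M] by auto
    have "AE w in M. w \<notin> A"
      using A(2) f_pos by eventually_elim auto
    then show "A \<in> null_sets M"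
      using AE_iff_null_sets[OF A(1)] by simp
  qed
qed

end

lemma u_fun_density_le_1:
  assumes XX: "XX \<subseteq> L0plus M" and [measurable]: "f \<in> borel_measurable M"
    and bound: "\<And>X. X \<in> XX \<Longrightarrow> (\<integral>\<^sup>+w. f w * ennreal (X w) \<partial>M) \<le> 1"
  shows "u_fun M XX n (density M f) \<le> 1"
  unfolding u_fun_def
proof (rule SUP_least)
  fix Y assume Y: "Y \<in> O_set M XX n"
  obtain Z where Z: "Z \<in> conv_shift XX n" "AE w in M. Y w \<le> Z w"
    using Y unfolding O_set_def by blast
  obtain k :: nat and c X where cX: "\<And>i. i < k \<Longrightarrow> 0 \<le> c i \<and> X i \<in> XX" "(\<Sum>i<k. c i) = 1"
    "\<And>w. w \<in> space M \<Longrightarrow> Z w \<le> (\<Sum>i<k. c i * X i w)"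
    using conv_shift_le_convex_combination[OF XX Z(1)] by blast
  have X_L0plus: "X i \<in> L0plus M" if "i < k" for i
    using cX(1)[OF that] XX by blast
  note [measurable] = L0plusD(1)[OF Y[THEN subsetD[OF O_set_subset_L0plus]]]
    L0plusD(1)[OF X_L0plus]
  have "(\<integral>\<^sup>+w. ennreal (Y w) \<partial>density M f) = (\<integral>\<^sup>+w. f w * ennreal (Y w) \<partial>M)"
    by (rule nn_integral_density) measurable
  also have "\<dots> \<le> (\<integral>\<^sup>+w. (\<Sum>i<k. ennreal (c i) * (f w * ennreal (X i w))) \<partial>M)"
  proof (rule nn_integral_mono_AE)
    show "AE w in M. f w * ennreal (Y w) \<le> (\<Sum>i<k. ennreal (c i) * (f w * ennreal (X i w)))"
      using Z(2) AE_space
    proof eventually_elim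
      case (elim w)
      have "ennreal (Y w) \<le> ennreal (\<Sum>i<k. c i * X i w)"
        using elim cX(3)[of w] by (intro ennreal_leI) linarith
      also have "\<dots> = (\<Sum>i<k. ennreal (c i * X i w))"
        using cX(1) L0plusD(2)[OF X_L0plus] elim by (intro sum_ennreal[symmetric]) auto
      also have "\<dots> = (\<Sum>i<k. ennreal (c i) * ennreal (X i w))"
        using cX(1) L0plusD(2)[OF X_L0plus] elim by (intro sum.cong refl ennreal_mult) auto
      finally have "f w * ennreal (Y w) \<le> f w * (\<Sum>i<k. ennreal (c i) * ennreal (X i w))"
        by (rule mult_left_mono) simp
      then show ?case
        by (simp add: sum_distrib_left mult_ac)
    qed
  qed
  also have "\<dots> = (\<Sum>i<k. ennreal (c i) * (\<integral>\<^sup>+w. f w * ennreal (X i w) \<partial>M))"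
    by (subst nn_integral_sum) (auto intro!: sum.cong nn_integral_cmult)
  also have "\<dots> \<le> (\<Sum>i<k. ennreal (c i) * 1)"
    using cX(1) bound by (intro sum_mono mult_left_mono) auto
  also have "\<dots> = 1"
    using cX(1,2) sum_ennreal[of "{..<k}" c] by simp
  finally show "(\<integral>\<^sup>+w. ennreal (Y w) \<partial>density M f) \<le> 1" .
qed

theorem lemmaA3:
  fixes M :: "'a measure" and XX :: "('a \<Rightarrow> real) set"
  assumes "prob_space M"
    and "XX \<subseteq> L0plus M"
    and "\<forall>Y\<in>L0plus M. (\<forall>n. Y \<in> O_set M XX n) \<longleftrightarrow> (AE \<omega> in M. Y \<omega> = 0)"
  shows "\<exists>\<mu>0\<in>M0plus M. absolutely_continuous \<mu>0 M \<and> (\<forall>n. u_fun M XX n \<mu>0 \<le> 1)"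
proof -
  interpret prob_space M
    by (fact assms(1))
  have XX_measurable: "XX \<subseteq> borel_measurable M"
    using assms(2) unfolding L0plus_def by blast
  obtain Bs :: "nat \<Rightarrow> 'a set" where Bs: "\<And>j. uniformly_bounded_on M XX (Bs j)" "AE w in M. \<exists>j. w \<in> Bs j"
  proof (rule countable_exhaustion[of "uniformly_bounded_on M XX"])
    show "uniformly_bounded_on M XX (B1 \<union> B2)"
      if "uniformly_bounded_on M XX B1" "uniformly_bounded_on M XX B2" for B1 B2
      using uniformly_bounded_on_Un[OF XX_measurable that] .
    show "B \<in> events" if "uniformly_bounded_on M XX B" for B
      using that unfolding uniformly_bounded_on_def by blast
    show "\<exists>B\<subseteq>A. uniformly_bounded_on M XX B \<and> 0 < prob B" if "A \<in> events" "0 < prob A" for A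
      using exists_uniformly_bounded_subset[OF assms(2,3) that] .
  qed (auto intro: that uniformly_bounded_on_empty)
  obtain f where f: "f \<in> borel_measurable M" "\<And>w. f w \<le> 1" "AE w in M. 0 < f w"
    "\<And>X. X \<in> XX \<Longrightarrow> (\<integral>\<^sup>+w. f w * ennreal (X w) \<partial>M) \<le> 1"
    by (rule exists_density_bounding[OF XX_measurable Bs]) blast
  show ?thesis
    using density_in_M0plus_equivalent[OF f(1-3)] u_fun_density_le_1[OF assms(2) f(1,4)] by blast
qed

end
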